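(* Let $T\ge 2$, $U$ a finite set of men and $W_1\subseteq\cdots\subseteq W_T$ finite sets of women, each man having a strict total order over $W_T$ and each woman a strict total order over $U$. Then there is an optimal solution $(M_1,\dots,M_T)$ of $T$-A-SMP on this instance in which $M_1$ is the men-optimal stable matching of $(U,W_1)$.
   Context: $T$-A-SMP: compute matchings $M_1,\dots,M_T$ with $M_t$ stable for $(U,W_t)$ (preferences restricted) minimizing $\sum_{t=1}^{T-1}|M_t\setminus M_{t+1}|$. A matching is a set of man–woman pairs with each person in at most one pair; a blocking pair of $M$ is a pair $(u,w)\notin M$ with ($u$ unmatched or preferring $w$ to his partner) and ($w$ unmatched or preferring $u$ to her partner); stable means no blocking pair. The men-optimal stable matching gives every man his most preferred partner among those he has in some stable matching. *)

theory Defs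
  imports Main
begin

text \<open>Preferences: (a, b) \<in> Pm u means man u strictly prefers woman a to woman b;
  (x, y) \<in> Pw w means woman w strictly prefers man x to man y.\<close>

definition is_matching :: "'m set \<Rightarrow> 'w set \<Rightarrow> ('m \<times> 'w) set \<Rightarrow> bool" where
  "is_matching U W M \<longleftrightarrow> M \<subseteq> U \<times> W \<and>
     (\<forall>u w w'. (u, w) \<in> M \<longrightarrow> (u, w') \<in> M \<longrightarrow> w = w') \<and>
     (\<forall>u u' w. (u, w) \<in> M \<longrightarrow> (u', w) \<in> M \<longrightarrow> u = u')"

definition blocking_pair ::
  "('m \<Rightarrow> ('w \<times> 'w) set) \<Rightarrow> ('w \<Rightarrow> ('m \<times> 'm) set) \<Rightarrow> ('m \<times> 'w) set \<Rightarrow> 'm \<Rightarrow> 'w \<Rightarrow> bool" where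
  "blocking_pair Pm Pw M u w \<longleftrightarrow> (u, w) \<notin> M \<and>
     ((\<forall>w'. (u, w') \<notin> M) \<or> (\<exists>w'. (u, w') \<in> M \<and> (w, w') \<in> Pm u)) \<and>
     ((\<forall>u'. (u', w) \<notin> M) \<or> (\<exists>u'. (u', w) \<in> M \<and> (u, u') \<in> Pw w))"

definition stable :: "'m set \<Rightarrow> 'w set \<Rightarrow> ('m \<Rightarrow> ('w \<times> 'w) set) \<Rightarrow> ('w \<Rightarrow> ('m \<times> 'm) set)
    \<Rightarrow> ('m \<times> 'w) set \<Rightarrow> bool" where
  "stable U W Pm Pw M \<longleftrightarrow> is_matching U W M \<and>
     (\<forall>u\<in>U. \<forall>w\<in>W. \<not> blocking_pair Pm Pw M u w)"

definition men_optimal :: "'m set \<Rightarrow> 'w set \<Rightarrow> ('m \<Rightarrow> ('w \<times> 'w) set) \<Rightarrow> ('w \<Rightarrow> ('m \<times> 'm) set)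
    \<Rightarrow> ('m \<times> 'w) set \<Rightarrow> bool" where
  "men_optimal U W Pm Pw M \<longleftrightarrow> stable U W Pm Pw M \<and>
     (\<forall>M'. stable U W Pm Pw M' \<longrightarrow>
        (\<forall>u w'. (u, w') \<in> M' \<longrightarrow> (\<exists>w. (u, w) \<in> M \<and> (w = w' \<or> (w, w') \<in> Pm u))))"

definition tasmp_feasible :: "nat \<Rightarrow> 'm set \<Rightarrow> (nat \<Rightarrow> 'w set) \<Rightarrow> ('m \<Rightarrow> ('w \<times> 'w) set)
    \<Rightarrow> ('w \<Rightarrow> ('m \<times> 'm) set) \<Rightarrow> (nat \<Rightarrow> ('m \<times> 'w) set) \<Rightarrow> bool" where
  "tasmp_feasible T U W Pm Pw M \<longleftrightarrow> (\<forall>t\<in>{1..T}. stable U (W t) Pm Pw (M t))"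

definition tasmp_cost :: "nat \<Rightarrow> (nat \<Rightarrow> ('m \<times> 'w) set) \<Rightarrow> nat" where
  "tasmp_cost T M = (\<Sum>t = 1..<T. card (M t - M (Suc t)))"

definition tasmp_optimal :: "nat \<Rightarrow> 'm set \<Rightarrow> (nat \<Rightarrow> 'w set) \<Rightarrow> ('m \<Rightarrow> ('w \<times> 'w) set)
    \<Rightarrow> ('w \<Rightarrow> ('m \<times> 'm) set) \<Rightarrow> (nat \<Rightarrow> ('m \<times> 'w) set) \<Rightarrow> bool" where
  "tasmp_optimal T U W Pm Pw M \<longleftrightarrow> tasmp_feasible T U W Pm Pw M \<and>
     (\<forall>M'. tasmp_feasible T U W Pm Pw M' \<longrightarrow> tasmp_cost T M \<le> tasmp_cost T M')"

end

theory Submission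
  imports Defs
begin

text \<open>Take any optimal solution N and replace it by M with M_1 the men-optimal stable matching
  of (U, W_1) and M_(t+1) the men-join of M_t and N_(t+1): every man keeps his M_t-partner if he
  strictly prefers her to his N_(t+1)-partner and takes the latter otherwise. Because W_t is
  contained in W_(t+1), this join is again stable for (U, W_(t+1)), and every man likes it at least
  as much as N_(t+1). Hence M_t dominates N_t for the men, and a man who changes partner from M_t
  to M_(t+1) moves up to his N_(t+1)-partner, which therefore differs from his N_t-partner: the
  cost of M is at most that of N.

  Stable matchings exist by deferred acceptance; the men-optimal one is a stable matching for which
  the number of pairs (u, w) with w no better than u's partner is maximal, because a join with a
  stable matching that some man strictly prefers would increase this number.\<close>

lemma strict_linear_order_on_finite_least:
  assumes "finite S" "S \<noteq> {}" "S \<subseteq> A" "strict_linear_order_on A r"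
  shows "\<exists>x\<in>S. \<forall>y\<in>S. y = x \<or> (x, y) \<in> r"
  using assms
proof (induction S rule: finite_ne_induct)
  case (singleton x)
  then show ?case by simp
next
  case (insert x F)
  then obtain b where b: "b \<in> F" "\<forall>y\<in>F. y = b \<or> (b, y) \<in> r" by auto
  have "trans r" "total_on A r"
    using insert.prems by (auto simp: strict_linear_order_on_def)
  show ?case
  proof (cases "(x, b) \<in> r")
    case True
    then show ?thesis using b \<open>trans r\<close> by (auto dest: transD)
  next
    case False
    then have "(b, x) \<in> r"
      using b insert \<open>total_on A r\<close> by (auto simp: total_on_def)
    then show ?thesis using b by auto
  qed
qed

lemma funpow_inflationary_reaches_fixpoint:
  assumes "finite S" and f: "\<And>X. X \<subseteq> S \<Longrightarrow> X \<subseteq> f X \<and> f X \<subseteq> S"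
  shows "\<exists>n. f ((f ^^ n) {}) = (f ^^ n) {}"
proof (rule ccontr)
  assume no_fix: "\<nexists>n. f ((f ^^ n) {}) = (f ^^ n) {}"
  have sub: "(f ^^ n) {} \<subseteq> S" for n
    by (induction n) (simp_all add: f)
  have "n \<le> card ((f ^^ n) {})" for n
  proof (induction n)
    case (Suc n)
    have "(f ^^ n) {} \<subset> (f ^^ Suc n) {}"
      using f[OF sub[of n]] no_fix by auto
    then have "card ((f ^^ n) {}) < card ((f ^^ Suc n) {})"
      using finite_subset[OF sub \<open>finite S\<close>] by (intro psubset_card_mono)
    then show ?case using Suc by simp
  qed simp
  moreover have "card ((f ^^ n) {}) \<le> card S" for n
    using card_mono[OF \<open>finite S\<close> sub] .
  ultimately show False
    using Suc_n_not_le_n le_trans by blast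
qed

lemma card_Image_matching:
  assumes "is_matching U W M"
  shows "card (M `` X) = card (X \<inter> Domain M)"
proof -
  let ?E = "M \<inter> X \<times> UNIV"
  have "bij_betw snd ?E (M `` X)" and "bij_betw fst ?E (X \<inter> Domain M)"
    using assms by (auto simp: bij_betw_def inj_on_def is_matching_def image_iff Bex_def)
  then show ?thesis
    using bij_betw_same_card by metis
qed

definition man_desires :: "('m \<Rightarrow> ('w \<times> 'w) set) \<Rightarrow> ('m \<times> 'w) set \<Rightarrow> 'm \<Rightarrow> 'w \<Rightarrow> bool" where
  "man_desires Pm M u w \<longleftrightarrow> (\<forall>w'. (u, w') \<notin> M) \<or> (\<exists>w'. (u, w') \<in> M \<and> (w, w') \<in> Pm u)"

definition woman_welcomes :: "('w \<Rightarrow> ('m \<times> 'm) set) \<Rightarrow> ('m \<times> 'w) set \<Rightarrow> 'm \<Rightarrow> 'w \<Rightarrow> bool" where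
  "woman_welcomes Pw M u w \<longleftrightarrow> (\<forall>u'. (u', w) \<notin> M) \<or> (\<exists>u'. (u', w) \<in> M \<and> (u, u') \<in> Pw w)"

lemma blocking_pair_iff:
  "blocking_pair Pm Pw M u w \<longleftrightarrow> (u, w) \<notin> M \<and> man_desires Pm M u w \<and> woman_welcomes Pw M u w"
  by (simp add: blocking_pair_def man_desires_def woman_welcomes_def)

locale stable_marriage_instance =
  fixes U :: "'m set" and WW :: "'w set"
    and Pm :: "'m \<Rightarrow> ('w \<times> 'w) set" and Pw :: "'w \<Rightarrow> ('m \<times> 'm) set"
  assumes finite_men: "finite U" and finite_women: "finite WW"
    and man_pref: "\<And>u. u \<in> U \<Longrightarrow> strict_linear_order_on WW (Pm u)"
    and woman_pref: "\<And>w. w \<in> WW \<Longrightarrow> strict_linear_order_on U (Pw w)"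
begin

lemma man_pref_irrefl: "u \<in> U \<Longrightarrow> (a, a) \<notin> Pm u"
  using man_pref by (auto simp: strict_linear_order_on_def irrefl_def)

lemma man_pref_trans: "u \<in> U \<Longrightarrow> (a, b) \<in> Pm u \<Longrightarrow> (b, c) \<in> Pm u \<Longrightarrow> (a, c) \<in> Pm u"
  using man_pref by (auto simp: strict_linear_order_on_def dest: transD)

lemma man_pref_asym: "u \<in> U \<Longrightarrow> (a, b) \<in> Pm u \<Longrightarrow> (b, a) \<notin> Pm u"
  using man_pref_irrefl man_pref_trans by blast

lemma man_pref_total:
  "u \<in> U \<Longrightarrow> a \<in> WW \<Longrightarrow> b \<in> WW \<Longrightarrow> a \<noteq> b \<Longrightarrow> (a, b) \<in> Pm u \<or> (b, a) \<in> Pm u"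
  using man_pref by (auto simp: strict_linear_order_on_def total_on_def)

lemma woman_pref_irrefl: "w \<in> WW \<Longrightarrow> (a, a) \<notin> Pw w"
  using woman_pref by (auto simp: strict_linear_order_on_def irrefl_def)

lemma woman_pref_trans: "w \<in> WW \<Longrightarrow> (a, b) \<in> Pw w \<Longrightarrow> (b, c) \<in> Pw w \<Longrightarrow> (a, c) \<in> Pw w"
  using woman_pref by (auto simp: strict_linear_order_on_def dest: transD)

lemma woman_pref_asym: "w \<in> WW \<Longrightarrow> (a, b) \<in> Pw w \<Longrightarrow> (b, a) \<notin> Pw w"
  using woman_pref_irrefl woman_pref_trans by blast

lemma woman_pref_total:
  "w \<in> WW \<Longrightarrow> a \<in> U \<Longrightarrow> b \<in> U \<Longrightarrow> a \<noteq> b \<Longrightarrow> (a, b) \<in> Pw w \<or> (b, a) \<in> Pw w"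
  using woman_pref by (auto simp: strict_linear_order_on_def total_on_def)

lemma stable_desired_woman_prefers_partner:
  assumes "stable U W Pm Pw M" "W \<subseteq> WW" "u \<in> U" "w \<in> W"
    and "(u, w) \<notin> M" "man_desires Pm M u w"
  shows "\<exists>u'. (u', w) \<in> M \<and> (u', u) \<in> Pw w"
proof -
  have "\<not> woman_welcomes Pw M u w"
    using assms unfolding stable_def blocking_pair_iff by blast
  then obtain u' where u': "(u', w) \<in> M" "(u, u') \<notin> Pw w"
    unfolding woman_welcomes_def by blast
  moreover have "u' \<in> U" "u' \<noteq> u"
    using assms u' unfolding stable_def is_matching_def by auto
  ultimately show ?thesis
    using woman_pref_total[of w u u'] assms by blast
qed

lemma stable_welcoming_man_prefers_partner:
  assumes "stable U W Pm Pw M" "W \<subseteq> WW" "u \<in> U" "w \<in> W"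
    and "(u, w) \<notin> M" "woman_welcomes Pw M u w"
  shows "\<exists>w'. (u, w') \<in> M \<and> (w', w) \<in> Pm u"
proof -
  have "\<not> man_desires Pm M u w"
    using assms unfolding stable_def blocking_pair_iff by blast
  then obtain w' where w': "(u, w') \<in> M" "(w, w') \<notin> Pm u"
    unfolding man_desires_def by blast
  moreover have "w' \<in> WW" "w' \<noteq> w"
    using assms w' unfolding stable_def is_matching_def by auto
  ultimately show ?thesis
    using man_pref_total[of u w w'] assms by blast
qed

end

section \<open>Existence of stable matchings by deferred acceptance\<close>

locale deferred_acceptance = stable_marriage_instance U WW Pm Pw
  for U :: "'m set" and WW :: "'w set" and Pm Pw +
  fixes W :: "'w set"
  assumes women_subset: "W \<subseteq> WW"
begin

text \<open>A round of deferred acceptance is determined by the set R of proposals rejected so far: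
  every man proposes to his best woman in W who has not rejected him, every woman holds her best
  proposer and rejects the others.\<close>

definition available :: "('m \<times> 'w) set \<Rightarrow> 'm \<Rightarrow> 'w set" where
  "available R u = {w \<in> W. (u, w) \<notin> R}"

definition proposals :: "('m \<times> 'w) set \<Rightarrow> ('m \<times> 'w) set" where
  "proposals R = {(u, w). u \<in> U \<and> w \<in> available R u \<and>
     (\<forall>w'\<in>available R u. w' = w \<or> (w, w') \<in> Pm u)}"

definition held :: "('m \<times> 'w) set \<Rightarrow> ('m \<times> 'w) set" where
  "held R = {(u, w) \<in> proposals R. \<forall>u'. (u', w) \<in> proposals R \<longrightarrow> u' = u \<or> (u, u') \<in> Pw w}"

definition reject_round :: "('m \<times> 'w) set \<Rightarrow> ('m \<times> 'w) set" where
  "reject_round R = R \<union> (proposals R - held R)"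

definition rejections_justified :: "('m \<times> 'w) set \<Rightarrow> bool" where
  "rejections_justified R \<longleftrightarrow> R \<subseteq> U \<times> W \<and>
     (\<forall>u w. (u, w) \<in> R \<longrightarrow> (\<exists>h. (h, w) \<in> held R \<and> (h, u) \<in> Pw w))"

lemma proposals_subset: "proposals R \<subseteq> U \<times> W"
  by (auto simp: proposals_def available_def)

lemma held_subset_proposals: "held R \<subseteq> proposals R"
  by (auto simp: held_def)

lemma held_is_matching: "is_matching U W (held R)"
  unfolding is_matching_def
proof (intro conjI allI impI)
  show "held R \<subseteq> U \<times> W"
    using held_subset_proposals proposals_subset by blast
next
  fix u w w' assume "(u, w) \<in> held R" "(u, w') \<in> held R"
  then have "u \<in> U" "w' = w \<or> (w, w') \<in> Pm u" "w = w' \<or> (w', w) \<in> Pm u"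
    by (auto simp: held_def proposals_def)
  then show "w = w'" using man_pref_asym by blast
next
  fix u u' w assume "(u, w) \<in> held R" "(u', w) \<in> held R"
  then have "w \<in> WW" "u' = u \<or> (u, u') \<in> Pw w" "u = u' \<or> (u', u) \<in> Pw w"
    using proposals_subset women_subset by (auto simp: held_def)
  then show "u = u'" using woman_pref_asym by blast
qed

lemma best_proposer_held:
  assumes "(u, w) \<in> proposals R"
  shows "\<exists>h. (h, w) \<in> held R \<and> (h = u \<or> (h, u) \<in> Pw w)"
proof -
  let ?S = "{u'. (u', w) \<in> proposals R}"
  have "?S \<subseteq> U" "w \<in> WW"
    using assms proposals_subset women_subset by auto
  then obtain h where "h \<in> ?S" "\<forall>y\<in>?S. y = h \<or> (h, y) \<in> Pw w"
    using strict_linear_order_on_finite_least[of ?S U "Pw w"] finite_subset finite_men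
      assms woman_pref by blast
  then show ?thesis
    using assms by (auto simp: held_def)
qed

lemma held_proposes_again: "(u, w) \<in> held R \<Longrightarrow> (u, w) \<in> proposals (reject_round R)"
  unfolding reject_round_def proposals_def held_def available_def by auto

lemma reject_round_justified:
  assumes "rejections_justified R"
  shows "rejections_justified (reject_round R)"
proof -
  have sub: "reject_round R \<subseteq> U \<times> W"
    using assms proposals_subset by (auto simp: rejections_justified_def reject_round_def)
  have "\<exists>h. (h, w) \<in> held (reject_round R) \<and> (h, u) \<in> Pw w"
    if uw: "(u, w) \<in> reject_round R" for u w
  proof -
    have "\<exists>h. (h, w) \<in> held R \<and> (h, u) \<in> Pw w"
    proof (cases "(u, w) \<in> R")
      case True
      then show ?thesis using assms by (simp add: rejections_justified_def)
    next
      case False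
      then have "(u, w) \<in> proposals R" "(u, w) \<notin> held R"
        using uw by (auto simp: reject_round_def)
      then show ?thesis using best_proposer_held by blast
    qed
    then obtain h where h: "(h, w) \<in> held R" "(h, u) \<in> Pw w" by blast
    txt \<open>A woman's held partner can only improve from one round to the next.\<close>
    obtain h' where "(h', w) \<in> held (reject_round R)" "h' = h \<or> (h', h) \<in> Pw w"
      using best_proposer_held[OF held_proposes_again[OF h(1)]] by blast
    moreover have "w \<in> WW"
      using sub uw women_subset by auto
    ultimately show ?thesis
      using h woman_pref_trans by blast
  qed
  then show ?thesis
    using sub by (auto simp: rejections_justified_def)
qed

lemma fixpoint_held_stable:
  assumes "rejections_justified R" "reject_round R = R"
  shows "stable U W Pm Pw (held R)"
proof -
  have proposals_held: "proposals R = held R"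
  proof -
    have "proposals R \<inter> R = {}"
      by (auto simp: proposals_def available_def)
    then show ?thesis
      using assms(2) held_subset_proposals unfolding reject_round_def by blast
  qed
  have "\<not> blocking_pair Pm Pw (held R) u w" if "u \<in> U" "w \<in> W" for u w
  proof
    assume bp: "blocking_pair Pm Pw (held R) u w"
    have "w \<in> WW" using that women_subset by auto
    show False
    proof (cases "(u, w) \<in> R")
      case True
      then have "\<exists>h. (h, w) \<in> held R \<and> (h, u) \<in> Pw w"
        using assms(1) by (simp add: rejections_justified_def)
      then obtain h where "(h, w) \<in> held R" "(h, u) \<in> Pw w" by blast
      moreover obtain x where "(x, w) \<in> held R" "(u, x) \<in> Pw w"
        using bp calculation by (auto simp: blocking_pair_def)
      ultimately show False
        using held_is_matching woman_pref_asym[OF \<open>w \<in> WW\<close>]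
        unfolding is_matching_def by blast
    next
      case False
      then have w_avail: "w \<in> available R u"
        using that by (auto simp: available_def)
      have "available R u \<subseteq> WW"
        using women_subset by (auto simp: available_def)
      then obtain b where b: "b \<in> available R u" "\<forall>y\<in>available R u. y = b \<or> (b, y) \<in> Pm u"
        using strict_linear_order_on_finite_least[of "available R u" WW "Pm u"]
          finite_subset[OF _ finite_women] w_avail man_pref[OF \<open>u \<in> U\<close>] by blast
      then have "(u, b) \<in> held R"
        using proposals_held \<open>u \<in> U\<close> by (auto simp: proposals_def)
      then show False
        using bp b w_avail held_is_matching man_pref_asym[OF \<open>u \<in> U\<close>]
        unfolding blocking_pair_def is_matching_def by metis
    qed
  qed
  then show ?thesis
    using held_is_matching by (simp add: stable_def)
qed

lemma stable_matching_exists: "\<exists>M. stable U W Pm Pw M"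
proof -
  have "finite (U \<times> W)"
    using finite_men finite_subset[OF women_subset finite_women] by simp
  moreover have "X \<subseteq> reject_round X \<and> reject_round X \<subseteq> U \<times> W" if "X \<subseteq> U \<times> W" for X
    using that proposals_subset by (auto simp: reject_round_def)
  ultimately obtain n where fixpoint: "reject_round ((reject_round ^^ n) {}) = (reject_round ^^ n) {}"
    using funpow_inflationary_reaches_fixpoint[of "U \<times> W" reject_round] by blast
  have "rejections_justified ((reject_round ^^ k) {})" for k
    by (induction k) (simp_all add: rejections_justified_def[of "{}"] reject_round_justified)
  then show ?thesis
    using fixpoint_held_stable fixpoint by blast
qed

end

section \<open>Joining stable matchings for nested sets of women\<close>

definition men_preferring :: "('m \<Rightarrow> ('w \<times> 'w) set) \<Rightarrow> ('m \<times> 'w) set \<Rightarrow> ('m \<times> 'w) set \<Rightarrow> 'm set" where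
  "men_preferring Pm M N = {u. \<exists>w. (u, w) \<in> M \<and> (\<forall>w'. (u, w') \<in> N \<longrightarrow> (w, w') \<in> Pm u)}"

definition men_join :: "('m \<Rightarrow> ('w \<times> 'w) set) \<Rightarrow> ('m \<times> 'w) set \<Rightarrow> ('m \<times> 'w) set \<Rightarrow> ('m \<times> 'w) set" where
  "men_join Pm M N = {(u, w) \<in> M. u \<in> men_preferring Pm M N} \<union> {(u, w) \<in> N. u \<notin> men_preferring Pm M N}"

definition weakly_dominates :: "('m \<Rightarrow> ('w \<times> 'w) set) \<Rightarrow> ('m \<times> 'w) set \<Rightarrow> ('m \<times> 'w) set \<Rightarrow> bool" where
  "weakly_dominates Pm M N \<longleftrightarrow> (\<forall>u w n. (u, w) \<in> M \<longrightarrow> (u, n) \<in> N \<longrightarrow> n = w \<or> (w, n) \<in> Pm u)"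

locale nested_stable_pair = stable_marriage_instance U WW Pm Pw
  for U :: "'m set" and WW :: "'w set" and Pm Pw +
  fixes W1 W2 :: "'w set" and M N :: "('m \<times> 'w) set"
  assumes smaller_subset: "W1 \<subseteq> W2" and larger_subset: "W2 \<subseteq> WW"
    and stable_M: "stable U W1 Pm Pw M" and stable_N: "stable U W2 Pm Pw N"
begin

abbreviation A :: "'m set" where "A \<equiv> men_preferring Pm M N"
abbreviation J :: "('m \<times> 'w) set" where "J \<equiv> men_join Pm M N"

lemma matching_M: "is_matching U W1 M"
  using stable_M by (simp add: stable_def)

lemma matching_N: "is_matching U W2 N"
  using stable_N by (simp add: stable_def)

lemma M_single_valued: "(u, w) \<in> M \<Longrightarrow> (u, w') \<in> M \<Longrightarrow> w = w'"
  and M_injective: "(u, w) \<in> M \<Longrightarrow> (u', w) \<in> M \<Longrightarrow> u = u'"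
  and M_subset: "(u, w) \<in> M \<Longrightarrow> u \<in> U \<and> w \<in> W1"
  using matching_M by (auto simp: is_matching_def)

lemma N_single_valued: "(u, w) \<in> N \<Longrightarrow> (u, w') \<in> N \<Longrightarrow> w = w'"
  and N_injective: "(u, w) \<in> N \<Longrightarrow> (u', w) \<in> N \<Longrightarrow> u = u'"
  and N_subset: "(u, w) \<in> N \<Longrightarrow> u \<in> U \<and> w \<in> W2"
  using matching_N by (auto simp: is_matching_def)

lemma preferring_partner_taken:
  assumes "u \<in> A" "(u, w) \<in> M"
  shows "\<exists>u'\<in>A. (u', w) \<in> N \<and> (u', u) \<in> Pw w"
proof -
  have better: "\<forall>w'. (u, w') \<in> N \<longrightarrow> (w, w') \<in> Pm u"
    using assms M_single_valued by (auto simp: men_preferring_def)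
  have u: "u \<in> U" and w: "w \<in> W1" "w \<in> W2" "w \<in> WW"
    using M_subset[OF assms(2)] smaller_subset larger_subset by auto
  have "(u, w) \<notin> N" "man_desires Pm N u w"
    using better man_pref_irrefl[OF u] by (auto simp: man_desires_def)
  then obtain u' where u': "(u', w) \<in> N" "(u', u) \<in> Pw w"
    using stable_desired_woman_prefers_partner[OF stable_N larger_subset u w(2)] by blast
  have "(u', w) \<notin> M"
    using u' assms(2) M_injective woman_pref_irrefl[OF w(3)] by blast
  moreover have "woman_welcomes Pw M u' w"
    using assms(2) u' M_injective by (auto simp: woman_welcomes_def)
  ultimately obtain w'' where "(u', w'') \<in> M" "(w'', w) \<in> Pm u'"
    using stable_welcoming_man_prefers_partner[OF stable_M] smaller_subset larger_subset
      N_subset[OF u'(1)] w(1) by blast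
  then have "u' \<in> A"
    using u'(1) N_single_valued by (auto simp: men_preferring_def)
  then show ?thesis using u' by blast
qed

text \<open>The men of A are matched in M to pairwise distinct women, all of whom are taken in N by
  men of A; counting shows that N matches A onto exactly the same women.\<close>

lemma preferring_partners_eq: "M `` A = N `` A"
  and preferring_matched: "A \<subseteq> Domain N"
proof -
  have "A \<subseteq> U" and A_dom: "A \<subseteq> Domain M"
    using M_subset by (auto simp: men_preferring_def)
  then have fin_A: "finite A"
    using finite_men finite_subset by blast
  have "N `` A \<subseteq> WW"
    using N_subset larger_subset by blast
  then have fin_NA: "finite (N `` A)"
    using finite_women finite_subset by blast
  have sub: "M `` A \<subseteq> N `` A"
    using preferring_partner_taken by blast
  have card_MA: "card (M `` A) = card A"
    using card_Image_matching[OF matching_M] A_dom by (simp add: Int_absorb2)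
  have card_NA: "card (N `` A) = card (A \<inter> Domain N)"
    using card_Image_matching[OF matching_N] .
  have "card (A \<inter> Domain N) \<le> card A"
    using fin_A by (simp add: card_mono)
  moreover have "card (M `` A) \<le> card (N `` A)"
    using card_mono[OF fin_NA sub] .
  ultimately have "card (M `` A) = card (N `` A)" "card (A \<inter> Domain N) = card A"
    using card_MA card_NA by linarith+
  then show "M `` A = N `` A" "A \<subseteq> Domain N"
    using card_subset_eq[OF fin_NA sub] card_subset_eq[OF fin_A Int_lower1, of "Domain N"]
    by auto
qed

lemma not_preferring_partner:
  assumes "(u, w') \<in> M" "u \<notin> A"
  shows "\<exists>w. (u, w) \<in> N \<and> (w = w' \<or> (w, w') \<in> Pm u)"
proof -
  obtain w where w: "(u, w) \<in> N" "(w', w) \<notin> Pm u"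
    using assms by (auto simp: men_preferring_def)
  then show ?thesis
    using man_pref_total[of u w' w] M_subset[OF assms(1)] N_subset[OF w(1)]
      smaller_subset larger_subset by blast
qed

lemma Domain_M_subset_Domain_N: "Domain M \<subseteq> Domain N"
  using preferring_matched not_preferring_partner by blast

lemma men_join_iff: "(u, w) \<in> J \<longleftrightarrow> (u \<in> A \<and> (u, w) \<in> M) \<or> (u \<notin> A \<and> (u, w) \<in> N)"
  by (auto simp: men_join_def)

lemma men_join_matching: "is_matching U W2 J"
  unfolding is_matching_def
proof (intro conjI allI impI)
  show "J \<subseteq> U \<times> W2"
    using M_subset N_subset smaller_subset by (auto simp: men_join_def)
next
  fix u w w' assume "(u, w) \<in> J" "(u, w') \<in> J"
  then show "w = w'"
    using M_single_valued N_single_valued unfolding men_join_iff by blast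
next
  have cross: "u = u'" if "u \<in> A" "(u, w) \<in> M" "u' \<notin> A" "(u', w) \<in> N" for u u' w
    using that preferring_partners_eq N_injective by blast
  fix u u' w assume "(u, w) \<in> J" "(u', w) \<in> J"
  then show "u = u'"
    using M_injective N_injective cross unfolding men_join_iff by metis
qed

lemma men_join_desires:
  assumes u: "u \<in> U" and "(u, w) \<notin> J" "man_desires Pm J u w"
  shows "(u, w) \<notin> M \<and> man_desires Pm M u w \<and> (u, w) \<notin> N \<and> man_desires Pm N u w"
proof (cases "u \<in> A")
  case True
  then obtain m where m: "(u, m) \<in> M" "\<forall>n. (u, n) \<in> N \<longrightarrow> (m, n) \<in> Pm u"
    by (auto simp: men_preferring_def)
  then have "(u, m) \<in> J"
    using True by (simp add: men_join_iff)
  then have wm: "(w, m) \<in> Pm u"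
    using assms(3) men_join_matching unfolding man_desires_def is_matching_def by blast
  have "(w, n) \<in> Pm u" if "(u, n) \<in> N" for n
    using wm m that man_pref_trans[OF u] by blast
  then show ?thesis
    using m wm M_single_valued man_pref_irrefl[OF u] man_pref_asym[OF u] unfolding man_desires_def
    by metis
next
  case False
  then have N_eq_J: "(u, x) \<in> N \<longleftrightarrow> (u, x) \<in> J" for x
    by (simp add: men_join_iff)
  then have N: "(u, w) \<notin> N" "man_desires Pm N u w"
    using assms(2,3) by (simp_all add: man_desires_def)
  have "(w, m) \<in> Pm u" if um: "(u, m) \<in> M" for m
  proof -
    obtain x where "(u, x) \<in> N" "x = m \<or> (x, m) \<in> Pm u"
      using not_preferring_partner[OF um False] by blast
    moreover have "(w, x) \<in> Pm u"
      using N calculation(1) N_single_valued unfolding man_desires_def by blast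
    ultimately show ?thesis
      using man_pref_trans[OF u] by blast
  qed
  then show ?thesis
    using N man_pref_irrefl[OF u] unfolding man_desires_def by blast
qed

lemma men_join_stable: "stable U W2 Pm Pw J"
proof -
  have "\<not> blocking_pair Pm Pw J u w" if u: "u \<in> U" and w: "w \<in> W2" for u w
  proof
    assume "blocking_pair Pm Pw J u w"
    then have uw: "(u, w) \<notin> J" "man_desires Pm J u w" and welcomes: "woman_welcomes Pw J u w"
      by (simp_all add: blocking_pair_iff)
    note desires = men_join_desires[OF u uw]
    obtain n where n: "(n, w) \<in> N" "(n, u) \<in> Pw w"
      using stable_desired_woman_prefers_partner[OF stable_N larger_subset u w] desires by blast
    txt \<open>If n leaves w in J, then n is in A and so is w's M-partner, who stays with her in J
      and whom she prefers to u by stability of M.\<close>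
    have "\<exists>x. (x, w) \<in> J \<and> (x, u) \<in> Pw w"
    proof (cases "n \<in> A")
      case False
      then show ?thesis using n by (auto simp: men_join_iff)
    next
      case True
      then obtain x where x: "x \<in> A" "(x, w) \<in> M"
        using n(1) preferring_partners_eq by blast
      then obtain y where "(y, w) \<in> M" "(y, u) \<in> Pw w"
        using stable_desired_woman_prefers_partner[OF stable_M _ u] desires M_subset
          smaller_subset larger_subset by blast
      then show ?thesis
        using x M_injective by (auto simp: men_join_iff)
    qed
    then show False
      using welcomes men_join_matching woman_pref_asym w larger_subset
      unfolding woman_welcomes_def is_matching_def by blast
  qed
  then show ?thesis
    using men_join_matching by (simp add: stable_def)
qed

lemma men_join_dominates: "weakly_dominates Pm J N"
  unfolding weakly_dominates_def men_join_iff men_preferring_def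
  using M_single_valued N_single_valued by blast

lemma men_join_drops_to_better:
  assumes "(u, w) \<in> M" "(u, w) \<notin> J"
  shows "\<exists>w'. (u, w') \<in> N \<and> (w', w) \<in> Pm u"
proof -
  have "u \<notin> A"
    using assms by (simp add: men_join_iff)
  then show ?thesis
    using not_preferring_partner[OF assms(1)] assms men_join_iff by blast
qed

end

section \<open>Men-optimal stable matchings\<close>

context stable_marriage_instance
begin

definition dominated_pairs :: "('m \<times> 'w) set \<Rightarrow> ('m \<times> 'w) set" where
  "dominated_pairs M = {(u, w) \<in> U \<times> WW. \<exists>w0. (u, w0) \<in> M \<and> (w0 = w \<or> (w0, w) \<in> Pm u)}"

lemma finite_dominated_pairs: "finite (dominated_pairs M)"
  using finite_men finite_women
  by (auto simp: dominated_pairs_def intro: finite_subset[of _ "U \<times> WW"])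

lemma card_dominated_pairs_less: "card (dominated_pairs M) < Suc (card (U \<times> WW))"
proof -
  have "dominated_pairs M \<subseteq> U \<times> WW"
    by (auto simp: dominated_pairs_def)
  then show ?thesis
    using finite_men finite_women card_mono[of "U \<times> WW"] by (simp add: less_Suc_eq_le)
qed

end

context nested_stable_pair
begin

lemma dominated_pairs_men_join_psubset:
  assumes "A \<noteq> {}"
  shows "dominated_pairs N \<subset> dominated_pairs J"
proof -
  have "dominated_pairs N \<subseteq> dominated_pairs J"
  proof
    fix p assume "p \<in> dominated_pairs N"
    then obtain v w w0 where p: "p = (v, w)" "v \<in> U" "w \<in> WW" "(v, w0) \<in> N"
      "w0 = w \<or> (w0, w) \<in> Pm v"
      by (auto simp: dominated_pairs_def)
    have "\<exists>j. (v, j) \<in> J"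
    proof (cases "v \<in> A")
      case True
      then obtain j where "(v, j) \<in> M" by (auto simp: men_preferring_def)
      then show ?thesis using True by (auto simp: men_join_iff)
    next
      case False
      then show ?thesis using p(4) by (auto simp: men_join_iff)
    qed
    then obtain j where j: "(v, j) \<in> J" by blast
    then have "w0 = j \<or> (j, w0) \<in> Pm v"
      using men_join_dominates p(4) by (simp add: weakly_dominates_def)
    then show "p \<in> dominated_pairs J"
      using p j man_pref_trans[OF p(2)] by (auto simp: dominated_pairs_def)
  qed
  moreover obtain u m where u: "u \<in> A" "(u, m) \<in> M"
    using assms by (auto simp: men_preferring_def)
  then have "(u, m) \<in> dominated_pairs J"
    using M_subset[OF u(2)] smaller_subset larger_subset
    by (auto simp: dominated_pairs_def men_join_iff)
  moreover have "(m, w0) \<in> Pm u" if "(u, w0) \<in> N" for w0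
    using u that M_single_valued by (auto simp: men_preferring_def)
  then have "(u, m) \<notin> dominated_pairs N"
    using M_subset[OF u(2)] man_pref_irrefl man_pref_asym
    unfolding dominated_pairs_def by blast
  ultimately show ?thesis by blast
qed

end

lemma (in stable_marriage_instance) men_optimal_exists:
  assumes W: "W \<subseteq> WW"
  shows "\<exists>M. men_optimal U W Pm Pw M"
proof -
  interpret deferred_acceptance U WW Pm Pw W
    using W by unfold_locales
  obtain Mx where Mx: "stable U W Pm Pw Mx"
    and max: "\<And>M. stable U W Pm Pw M \<Longrightarrow> card (dominated_pairs M) \<le> card (dominated_pairs Mx)"
    using Lattices_Big.ex_has_greatest_nat[of "stable U W Pm Pw" _ "\<lambda>M. card (dominated_pairs M)"]
      stable_matching_exists card_dominated_pairs_less by blast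
  have "\<exists>w. (u, w) \<in> Mx \<and> (w = w' \<or> (w, w') \<in> Pm u)"
    if M': "stable U W Pm Pw M'" "(u, w') \<in> M'" for M' u w'
  proof -
    interpret pair: nested_stable_pair U WW Pm Pw W W M' Mx
      using W M' Mx by unfold_locales auto
    have "pair.A = {}"
    proof (rule ccontr)
      assume "pair.A \<noteq> {}"
      then have "card (dominated_pairs Mx) < card (dominated_pairs pair.J)"
        using pair.dominated_pairs_men_join_psubset finite_dominated_pairs
        by (intro psubset_card_mono)
      then show False
        using max[OF pair.men_join_stable] by simp
    qed
    then show ?thesis
      using pair.not_preferring_partner M'(2) by blast
  qed
  then show ?thesis
    using Mx by (auto simp: men_optimal_def)
qed

lemma (in nested_stable_pair) card_diff_men_join_le:
  assumes "stable U W1 Pm Pw N1" "weakly_dominates Pm M N1"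
  shows "card (M - J) \<le> card (N1 - N)"
proof -
  interpret same_women: nested_stable_pair U WW Pm Pw W1 W1 M N1
    using assms stable_M smaller_subset larger_subset by unfold_locales auto
  txt \<open>A man who leaves his M-partner in J moves up in N; so his N1-partner, which is no better
    than his M-partner, is not his N-partner either.\<close>
  have leavers: "fst ` (M - J) \<subseteq> fst ` (N1 - N)"
  proof
    fix u assume "u \<in> fst ` (M - J)"
    then obtain w where w: "(u, w) \<in> M" "(u, w) \<notin> J" by auto
    obtain w' where w': "(u, w') \<in> N" "(w', w) \<in> Pm u"
      using men_join_drops_to_better[OF w] by blast
    obtain m where m: "(u, m) \<in> N1"
      using same_women.Domain_M_subset_Domain_N w(1) by blast
    have "m = w \<or> (w, m) \<in> Pm u"
      using assms(2) w(1) m by (simp add: weakly_dominates_def)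
    then have "(u, m) \<notin> N"
      using w' N_single_valued man_pref_irrefl man_pref_asym M_subset[OF w(1)] by blast
    then show "u \<in> fst ` (N1 - N)"
      using m by force
  qed
  have "N1 \<subseteq> U \<times> WW"
    using smaller_subset larger_subset by (auto dest!: same_women.N_subset)
  then have "finite N1"
    using finite_men finite_women finite_subset by blast
  have "card (M - J) = card (fst ` (M - J))"
    using M_single_valued by (intro card_image[symmetric]) (auto simp: inj_on_def)
  also have "\<dots> \<le> card (fst ` (N1 - N))"
    using leavers \<open>finite N1\<close> by (intro card_mono) auto
  also have "\<dots> \<le> card (N1 - N)"
    using \<open>finite N1\<close> by (intro card_image_le) auto
  finally show ?thesis .
qed

lemma men_optimal_weakly_dominates:
  assumes "men_optimal U W Pm Pw M" "stable U W Pm Pw N"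
  shows "weakly_dominates Pm M N"
  unfolding weakly_dominates_def
proof (intro allI impI)
  fix u w n assume "(u, w) \<in> M" "(u, n) \<in> N"
  moreover obtain w' where "(u, w') \<in> M" "w' = n \<or> (w', n) \<in> Pm u"
    using assms calculation(2) unfolding men_optimal_def by blast
  moreover have "is_matching U W M"
    using assms(1) by (simp add: men_optimal_def stable_def)
  ultimately show "n = w \<or> (w, n) \<in> Pm u"
    unfolding is_matching_def by blast
qed

text \<open>The chain starts with M1 at time 1; index 0 is unused.\<close>

fun men_join_chain ::
  "('m \<Rightarrow> ('w \<times> 'w) set) \<Rightarrow> ('m \<times> 'w) set \<Rightarrow> (nat \<Rightarrow> ('m \<times> 'w) set) \<Rightarrow> nat \<Rightarrow> ('m \<times> 'w) set"
where
  "men_join_chain Pm M1 N 0 = M1"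
| "men_join_chain Pm M1 N (Suc 0) = M1"
| "men_join_chain Pm M1 N (Suc (Suc t)) =
     men_join Pm (men_join_chain Pm M1 N (Suc t)) (N (Suc (Suc t)))"

lemma men_join_chain_Suc: "1 \<le> t \<Longrightarrow>
  men_join_chain Pm M1 N (Suc t) = men_join Pm (men_join_chain Pm M1 N t) (N (Suc t))"
  by (cases t) auto

context stable_marriage_instance
begin

context
  fixes T :: nat and W :: "nat \<Rightarrow> 'w set" and N :: "nat \<Rightarrow> ('m \<times> 'w) set" and M1
  assumes nested: "\<And>t. 1 \<le> t \<Longrightarrow> t < T \<Longrightarrow> W t \<subseteq> W (Suc t)"
    and within: "\<And>t. 1 \<le> t \<Longrightarrow> t \<le> T \<Longrightarrow> W t \<subseteq> WW"
    and feasible: "tasmp_feasible T U W Pm Pw N"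
    and men_optimal_M1: "men_optimal U (W 1) Pm Pw M1"
begin

lemma men_join_chain_stable_dominates:
  assumes "1 \<le> t" "t \<le> T"
  shows "stable U (W t) Pm Pw (men_join_chain Pm M1 N t) \<and>
    weakly_dominates Pm (men_join_chain Pm M1 N t) (N t)"
  using assms
proof (induction t rule: dec_induct)
  case base
  have "stable U (W 1) Pm Pw (N 1)"
    using feasible assms by (auto simp: tasmp_feasible_def)
  then show ?case
    using men_optimal_M1 men_optimal_weakly_dominates[OF men_optimal_M1]
    by (simp add: men_optimal_def)
next
  case (step n)
  interpret nested_stable_pair U WW Pm Pw "W n" "W (Suc n)" "men_join_chain Pm M1 N n" "N (Suc n)"
    using step nested within feasible by unfold_locales (auto simp: tasmp_feasible_def)
  have "men_join_chain Pm M1 N (Suc n) = J"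
    by (rule men_join_chain_Suc[OF step(1)])
  then show ?case
    using men_join_stable men_join_dominates by simp
qed

lemma men_join_chain_feasible: "tasmp_feasible T U W Pm Pw (men_join_chain Pm M1 N)"
  using men_join_chain_stable_dominates by (simp add: tasmp_feasible_def)

lemma men_join_chain_cost_le: "tasmp_cost T (men_join_chain Pm M1 N) \<le> tasmp_cost T N"
proof -
  have "card (men_join_chain Pm M1 N t - men_join_chain Pm M1 N (Suc t)) \<le> card (N t - N (Suc t))"
    if t: "1 \<le> t" "t < T" for t
  proof -
    note chain = men_join_chain_stable_dominates[OF t(1) less_imp_le[OF t(2)]]
    interpret nested_stable_pair U WW Pm Pw "W t" "W (Suc t)" "men_join_chain Pm M1 N t" "N (Suc t)"
      using t nested within feasible chain by unfold_locales (auto simp: tasmp_feasible_def)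
    have "stable U (W t) Pm Pw (N t)"
      using feasible t by (simp add: tasmp_feasible_def)
    moreover have "men_join_chain Pm M1 N (Suc t) = J"
      by (rule men_join_chain_Suc[OF t(1)])
    ultimately show ?thesis
      using card_diff_men_join_le chain by simp
  qed
  then show ?thesis
    unfolding tasmp_cost_def by (intro sum_mono) auto
qed

end

end

theorem corollary1:
  fixes T :: nat and U :: "'m set" and W :: "nat \<Rightarrow> 'w set"
    and Pm :: "'m \<Rightarrow> ('w \<times> 'w) set" and Pw :: "'w \<Rightarrow> ('m \<times> 'm) set"
  assumes "T \<ge> 2"
    and "finite U" and "finite (W T)"
    and "\<And>t. 1 \<le> t \<Longrightarrow> t < T \<Longrightarrow> W t \<subseteq> W (Suc t)"
    and "\<And>u. u \<in> U \<Longrightarrow> strict_linear_order_on (W T) (Pm u) \<and> Pm u \<subseteq> W T \<times> W T"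
    and "\<And>w. w \<in> W T \<Longrightarrow> strict_linear_order_on U (Pw w) \<and> Pw w \<subseteq> U \<times> U"
  shows "\<exists>M. tasmp_optimal T U W Pm Pw M \<and> men_optimal U (W 1) Pm Pw (M 1)"
proof -
  interpret stable_marriage_instance U "W T" Pm Pw
    using assms(2,3,5,6) by unfold_locales auto
  have within: "W t \<subseteq> W T" if "1 \<le> t" "t \<le> T" for t
    using lift_Suc_mono_le_ivl[of "{1..<T}" W t T] assms(4) that by auto
  have "\<exists>M. stable U (W t) Pm Pw M" if "1 \<le> t" "t \<le> T" for t
    using men_optimal_exists[OF within[OF that]] by (auto simp: men_optimal_def)
  then have "tasmp_feasible T U W Pm Pw (\<lambda>t. SOME M. stable U (W t) Pm Pw M)"
    unfolding tasmp_feasible_def by (auto intro: someI_ex)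
  then obtain N where N: "tasmp_feasible T U W Pm Pw N"
    and N_least: "\<And>M. tasmp_feasible T U W Pm Pw M \<Longrightarrow> tasmp_cost T N \<le> tasmp_cost T M"
    using ex_has_least_nat[of "tasmp_feasible T U W Pm Pw" _ "tasmp_cost T"] by blast
  obtain M1 where M1: "men_optimal U (W 1) Pm Pw M1"
    using men_optimal_exists[OF within] assms(1) by force
  have "tasmp_optimal T U W Pm Pw (men_join_chain Pm M1 N)"
    using men_join_chain_feasible[OF assms(4) within N M1]
      men_join_chain_cost_le[OF assms(4) within N M1] N_least
    unfolding tasmp_optimal_def by (meson order_trans)
  then show ?thesis
    using M1 by auto
qed

end
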